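(* The map $\mathrm{Trns}_\mu$, restricted to $\Lambda_W^\mu\times\mathcal A$, is injective.
   Context: Let $\underline{G}=(\mathrm{Res}_{\mathbb{F}_{p^f}/\mathbb{F}_p}\mathrm{GL}_3)\times\mathbb{F}\cong\mathrm{GL}_3^f$ with diagonal torus $\underline T$, $X^*(\underline T)\cong(\mathbb{Z}^3)^f$, $\eta=((1,0,-1))_i$, $\pi$ the Frobenius shift $(\pi\lambda)_i=\lambda_{i-1}$, $\mu\in X^*(\underline T)$. Let $\Lambda_W\supset\Lambda_R$ be the weight and root lattices of $\mathrm{SL}_3^f$, $\lambda\mapsto\overline\lambda$ restriction $X^*(\underline T)\to\Lambda_W$ with kernel $X^0(\underline T)$, $\mathrm{can}$ the canonical embedding of $\Lambda_R$ in $X^*(\underline T)$ (characters trivial on the center), $\mathrm{sec}:\Lambda_W\to X^*(\underline T)$ a section. Using the $p$-dot action $t_\lambda w\cdot\mu=p\lambda+w(\mu+\eta)-\eta$, let $\underline A$ be the lowest dominant $p$-restricted alcove, $\mathcal A=\{A,B\}^f$ the dominant $p$-restricted alcoves, $\widetilde{\underline W}^{+,\mathrm{der}}_1$ the elements $wt_{-\pi^{-1}\omega}$ of $\Lambda_W\rtimes S_3^f$ taking $\underline A$ into $\mathcal A$. Writing uniquely elements of $\Lambda_W\times\mathcal A$ as $(\omega+\nu,\pi wt_{-\pi^{-1}\omega}\cdot\underline A)$ with $\nu\in\Lambda_R$, define $\mathrm{Trns}_\mu(\omega+\nu,\pi wt_{-\pi^{-1}\omega}\cdot\underline A)=wt_{-\pi^{-1}\mathrm{sec}(\omega)}\cdot(\mu-\eta+\mathrm{can}(\nu)+\mathrm{sec}(\omega))\in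 X^*(\underline T)/(p-\pi)X^0(\underline T)$, and $\Lambda_W^\mu=\{\omega\in\Lambda_W:\omega+\overline{\mu-\eta}\in\underline A\}$. *)

theory Defs
  imports Complex_Main "HOL-Combinatorics.Permutations" "HOL-Computational_Algebra.Primes"
begin

text \<open>The group is GL_3^f.  A character (element of X^*(T) = (Z^3)^f,
  or of X^*(T) tensor R for real points) is a function  x :: nat => nat => 'a  where
  x i j is the j-th coordinate (j < 3) of the i-th embedding (i < f); it vanishes outside
  i < f, j < 3.  Elements of Lambda_W = X^*(T)/X^0(T) are the cosets of X^0(T).\<close>

definition chars :: "nat \<Rightarrow> (nat \<Rightarrow> nat \<Rightarrow> 'a::zero) set" where
  "chars f = {x. \<forall>i j. (f \<le> i \<or> 3 \<le> j) \<longrightarrow> x i j = 0}"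

definition cadd :: "(nat \<Rightarrow> nat \<Rightarrow> 'a::plus) \<Rightarrow> (nat \<Rightarrow> nat \<Rightarrow> 'a) \<Rightarrow> nat \<Rightarrow> nat \<Rightarrow> 'a" where
  "cadd x y = (\<lambda>i j. x i j + y i j)"

definition csub :: "(nat \<Rightarrow> nat \<Rightarrow> 'a::minus) \<Rightarrow> (nat \<Rightarrow> nat \<Rightarrow> 'a) \<Rightarrow> nat \<Rightarrow> nat \<Rightarrow> 'a" where
  "csub x y = (\<lambda>i j. x i j - y i j)"

definition cscale :: "'a::times \<Rightarrow> (nat \<Rightarrow> nat \<Rightarrow> 'a) \<Rightarrow> nat \<Rightarrow> nat \<Rightarrow> 'a" where
  "cscale c x = (\<lambda>i j. c * x i j)"

definition cofint :: "(nat \<Rightarrow> nat \<Rightarrow> int) \<Rightarrow> nat \<Rightarrow> nat \<Rightarrow> 'a::ring_1" where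
  "cofint x = (\<lambda>i j. of_int (x i j))"

definition eta :: "nat \<Rightarrow> nat \<Rightarrow> nat \<Rightarrow> 'a::ring_1" where
  "eta f = (\<lambda>i j. if i < f \<and> j < 3 then 1 - of_nat j else 0)"

text \<open>Frobenius shift (pi x)_i = x_{i-1} (indices mod f) and its inverse.\<close>
definition piS :: "nat \<Rightarrow> (nat \<Rightarrow> 'b) \<Rightarrow> nat \<Rightarrow> 'b" where
  "piS f x = (\<lambda>i. x ((i + f - 1) mod f))"

definition piC :: "nat \<Rightarrow> (nat \<Rightarrow> nat \<Rightarrow> 'a::zero) \<Rightarrow> nat \<Rightarrow> nat \<Rightarrow> 'a" where
  "piC f x = (\<lambda>i j. if i < f then x ((i + f - 1) mod f) j else 0)"

definition piCinv :: "nat \<Rightarrow> (nat \<Rightarrow> nat \<Rightarrow> 'a::zero) \<Rightarrow> nat \<Rightarrow> nat \<Rightarrow> 'a" where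
  "piCinv f x = (\<lambda>i j. if i < f then x ((i + 1) mod f) j else 0)"

text \<open>X^0(T): characters trivial on the derived subgroup (constant in each embedding).\<close>
definition X0 :: "nat \<Rightarrow> (nat \<Rightarrow> nat \<Rightarrow> int) set" where
  "X0 f = {x \<in> chars f. \<forall>i<f. x i 1 = x i 0 \<and> x i 2 = x i 0}"

text \<open>Characters trivial on the center: image of can.\<close>
definition rootchars :: "nat \<Rightarrow> (nat \<Rightarrow> nat \<Rightarrow> int) set" where
  "rootchars f = {x \<in> chars f. \<forall>i<f. x i 0 + x i 1 + x i 2 = 0}"

text \<open>Restriction X^*(T) -> Lambda_W, lambda |-> overline lambda.\<close>
definition bar :: "nat \<Rightarrow> (nat \<Rightarrow> nat \<Rightarrow> int) \<Rightarrow> (nat \<Rightarrow> nat \<Rightarrow> int) set" where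
  "bar f x = {y \<in> chars f. csub y x \<in> X0 f}"

definition LamW :: "nat \<Rightarrow> (nat \<Rightarrow> nat \<Rightarrow> int) set set" where
  "LamW f = bar f ` chars f"

definition LamR :: "nat \<Rightarrow> (nat \<Rightarrow> nat \<Rightarrow> int) set set" where
  "LamR f = bar f ` rootchars f"

definition can :: "nat \<Rightarrow> (nat \<Rightarrow> nat \<Rightarrow> int) set \<Rightarrow> nat \<Rightarrow> nat \<Rightarrow> int" where
  "can f \<nu> = (THE x. x \<in> rootchars f \<and> bar f x = \<nu>)"

definition wadd :: "(nat \<Rightarrow> nat \<Rightarrow> int) set \<Rightarrow> (nat \<Rightarrow> nat \<Rightarrow> int) set \<Rightarrow> (nat \<Rightarrow> nat \<Rightarrow> int) set" where
  "wadd \<omega> \<nu> = {cadd a b | a b. a \<in> \<omega> \<and> b \<in> \<nu>}"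

definition Wgrp :: "nat \<Rightarrow> (nat \<Rightarrow> nat \<Rightarrow> nat) set" where
  "Wgrp f = {w. \<forall>i. w i permutes {0..<3} \<and> (f \<le> i \<longrightarrow> w i = id)}"

definition wact :: "(nat \<Rightarrow> nat \<Rightarrow> nat) \<Rightarrow> (nat \<Rightarrow> nat \<Rightarrow> 'a) \<Rightarrow> nat \<Rightarrow> nat \<Rightarrow> 'a" where
  "wact w x = (\<lambda>i j. x i (inv (w i) j))"

text \<open>p-dot action of w t_lambda (lambda an integral character) on x:
  w t_lambda . x = w(p lambda + x + eta) - eta.\<close>
definition dot :: "nat \<Rightarrow> nat \<Rightarrow> (nat \<Rightarrow> nat \<Rightarrow> nat) \<Rightarrow> (nat \<Rightarrow> nat \<Rightarrow> int)
    \<Rightarrow> (nat \<Rightarrow> nat \<Rightarrow> 'a::ring_1) \<Rightarrow> nat \<Rightarrow> nat \<Rightarrow> 'a" where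
  "dot f p w lam x = csub (wact w (cadd (cadd (cscale (of_nat p) (cofint lam)) x) (eta f))) (eta f)"

text \<open>Dominant p-restricted alcoves of GL_3^f: products of the lower alcove A and the
  upper alcove B (for the p-dot action), the choice in embedding i given by c i
  (True = B, False = A).\<close>
definition alc :: "nat \<Rightarrow> nat \<Rightarrow> (nat \<Rightarrow> bool) \<Rightarrow> (nat \<Rightarrow> nat \<Rightarrow> real) set" where
  "alc f p c = {x \<in> chars f. \<forall>i<f.
     (if c i then cadd x (eta f) i 0 - cadd x (eta f) i 1 < real p
                \<and> cadd x (eta f) i 1 - cadd x (eta f) i 2 < real p
                \<and> real p < cadd x (eta f) i 0 - cadd x (eta f) i 2
      else 0 < cadd x (eta f) i 0 - cadd x (eta f) i 1
                \<and> 0 < cadd x (eta f) i 1 - cadd x (eta f) i 2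
                \<and> cadd x (eta f) i 0 - cadd x (eta f) i 2 < real p)}"

definition lowA :: "nat \<Rightarrow> nat \<Rightarrow> (nat \<Rightarrow> nat \<Rightarrow> real) set" where
  "lowA f p = alc f p (\<lambda>_. False)"

definition Acal :: "nat \<Rightarrow> nat \<Rightarrow> (nat \<Rightarrow> nat \<Rightarrow> real) set set" where
  "Acal f p = {alc f p c | c. True}"

text \<open>Image of a set of real points under w t_{-omega}, omega \<in> Lambda_W (a coset).\<close>
definition alcimg :: "nat \<Rightarrow> nat \<Rightarrow> (nat \<Rightarrow> nat \<Rightarrow> nat) \<Rightarrow> (nat \<Rightarrow> nat \<Rightarrow> int) set
    \<Rightarrow> (nat \<Rightarrow> nat \<Rightarrow> real) set \<Rightarrow> (nat \<Rightarrow> nat \<Rightarrow> real) set" where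
  "alcimg f p w \<omega> S = {dot f p w (cscale (-1) r) x | x r. x \<in> S \<and> r \<in> \<omega>}"

text \<open>W~^{+,der}_1: the pairs (w, omega) such that w t_{-pi^{-1} omega} maps underline A into \<A>.\<close>
definition Wt1 :: "nat \<Rightarrow> nat \<Rightarrow> ((nat \<Rightarrow> nat \<Rightarrow> nat) \<times> (nat \<Rightarrow> nat \<Rightarrow> int) set) set" where
  "Wt1 f p = {(w, \<omega>). w \<in> Wgrp f \<and> \<omega> \<in> LamW f \<and>
      alcimg f p w (piCinv f ` \<omega>) (lowA f p) \<in> Acal f p}"

text \<open>Frobenius on S_3^f; pi(w t_{-pi^{-1} omega}) = (pi w) t_{-omega}.\<close>
definition piW :: "nat \<Rightarrow> (nat \<Rightarrow> nat \<Rightarrow> nat) \<Rightarrow> nat \<Rightarrow> nat \<Rightarrow> nat" where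
  "piW f w = (\<lambda>i. if i < f then w ((i + f - 1) mod f) else id)"

text \<open>The class of x in X^*(T)/(p - pi) X^0(T).\<close>
definition qcls :: "nat \<Rightarrow> nat \<Rightarrow> (nat \<Rightarrow> nat \<Rightarrow> int) \<Rightarrow> (nat \<Rightarrow> nat \<Rightarrow> int) set" where
  "qcls f p x = {y \<in> chars f. \<exists>z \<in> X0 f. csub y x = csub (cscale (int p) z) (piC f z)}"

text \<open>Trns_mu, for a section sec of the restriction map.\<close>
definition Trns :: "nat \<Rightarrow> nat \<Rightarrow> (nat \<Rightarrow> nat \<Rightarrow> int) \<Rightarrow> ((nat \<Rightarrow> nat \<Rightarrow> int) set \<Rightarrow> nat \<Rightarrow> nat \<Rightarrow> int)
    \<Rightarrow> (nat \<Rightarrow> nat \<Rightarrow> int) set \<times> (nat \<Rightarrow> nat \<Rightarrow> real) set \<Rightarrow> (nat \<Rightarrow> nat \<Rightarrow> int) set" where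
  "Trns f p \<mu> sec = (\<lambda>(lam, C). THE v. \<exists>\<omega> \<nu> w.
      (w, \<omega>) \<in> Wt1 f p \<and> \<nu> \<in> LamR f \<and> lam = wadd \<omega> \<nu> \<and>
      C = alcimg f p (piW f w) \<omega> (lowA f p) \<and>
      v = qcls f p (dot f p w (cscale (-1) (piCinv f (sec \<omega>)))
                     (cadd (cadd (csub \<mu> (eta f)) (can f \<nu>)) (sec \<omega>))))"

definition LamWmu :: "nat \<Rightarrow> nat \<Rightarrow> (nat \<Rightarrow> nat \<Rightarrow> int) \<Rightarrow> (nat \<Rightarrow> nat \<Rightarrow> int) set set" where
  "LamWmu f p \<mu> = {\<omega> \<in> LamW f. \<forall>y \<in> wadd \<omega> (bar f (csub \<mu> (eta f))). cofint y \<in> lowA f p}"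

end

theory Submission
  imports Defs
begin

text \<open>Every pair \<open>(\<lambda>, C)\<close> decomposes uniquely as \<open>(\<omega> + \<nu>, \<pi> w t\<^bsub>-\<pi>\<^sup>-\<^sup>1\<omega>\<^esub> \<cdot> A)\<close>:
  in each embedding both alcoves \<open>A\<close> and \<open>B\<close> are images of the lower alcove under exactly one
  affine Weyl element per class of \<open>\<Lambda>\<^sub>W/\<Lambda>\<^sub>R \<cong> \<int>/3\<close>, and two such elements of the same class
  that send points of the lower alcove to the same point coincide, the lower alcove being a
  fundamental domain.

  For injectivity, suppose two values of \<open>Trns\<^sub>\<mu>\<close> differ by \<open>(p - \<pi>) z\<close> with \<open>z \<in> X\<^sup>0\<close>. Summing
  coordinates in each embedding (the determinant) shows that the defect of the row sums of the two
  translation parts satisfies \<open>e = p \<cdot> \<pi>\<^sup>-\<^sup>1 e\<close>, hence vanishes as \<open>p \<ge> 2\<close>. This is exactly the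
  congruence needed to apply the fundamental domain property in every embedding to the points
  \<open>\<mu> - \<eta> + \<omega> + \<nu>\<close>, which lie in the lower alcove because \<open>\<omega> + \<nu> \<in> \<Lambda>\<^sub>W\<^sup>\<mu>\<close>; it returns equal Weyl
  group elements and equal weights.\<close>

section \<open>Characters modulo \<open>X\<^sup>0\<close>\<close>

lemma less_3_cases: "(m::nat) < 3 \<Longrightarrow> m = 0 \<or> m = 1 \<or> m = 2"
  by auto

lemma charsD: "x \<in> chars f \<Longrightarrow> f \<le> i \<or> 3 \<le> j \<Longrightarrow> x i j = 0"
  by (auto simp: chars_def)

lemma charsI: "(\<And>i j. f \<le> i \<or> 3 \<le> j \<Longrightarrow> x i j = 0) \<Longrightarrow> x \<in> chars f"
  by (simp add: chars_def)

lemma cadd_chars: "x \<in> chars f \<Longrightarrow> y \<in> chars f \<Longrightarrow> cadd x y \<in> chars f"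
  for x y :: "nat \<Rightarrow> nat \<Rightarrow> 'a::monoid_add"
  by (simp add: chars_def cadd_def)

lemma csub_chars: "x \<in> chars f \<Longrightarrow> y \<in> chars f \<Longrightarrow> csub x y \<in> chars f"
  for x y :: "nat \<Rightarrow> nat \<Rightarrow> 'a::group_add"
  by (simp add: chars_def csub_def)

lemma eta_chars: "eta f \<in> chars f"
  by (simp add: chars_def eta_def)

lemma eta_apply: "eta f i j = (if i < f \<and> j < 3 then 1 - of_nat j else 0)"
  by (simp add: eta_def)

lemma of_int_eta: "of_int (eta f i j) = eta f i j"
  by (simp add: eta_apply)

lemma X0_iff: "z \<in> X0 f \<longleftrightarrow> z \<in> chars f \<and> (\<exists>c. \<forall>i<f. \<forall>j<3. z i j = c i)"
proof
  assume z: "z \<in> X0 f"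
  then have zc: "z \<in> chars f" and z12: "\<forall>i<f. z i 1 = z i 0 \<and> z i 2 = z i 0"
    by (simp_all add: X0_def)
  have "\<forall>i<f. \<forall>j<3. z i j = z i 0"
  proof (intro allI impI)
    fix i j :: nat
    assume "i < f" "j < 3"
    then show "z i j = z i 0"
      using z12 less_3_cases[of j] by auto
  qed
  with zc show "z \<in> chars f \<and> (\<exists>c. \<forall>i<f. \<forall>j<3. z i j = c i)"
    by (intro conjI exI[of _ "\<lambda>i. z i 0"])
next
  assume "z \<in> chars f \<and> (\<exists>c. \<forall>i<f. \<forall>j<3. z i j = c i)"
  then obtain c where "z \<in> chars f" "\<forall>i<f. \<forall>j<3. z i j = c i"
    by blast
  then show "z \<in> X0 f"
    by (simp add: X0_def)
qed

lemma csub_X0_iff: "x \<in> chars f \<Longrightarrow> y \<in> chars f \<Longrightarrow>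
    csub x y \<in> X0 f \<longleftrightarrow> (\<exists>c. \<forall>i<f. \<forall>j<3. x i j - y i j = c i)"
  by (simp add: X0_iff csub_chars) (simp add: csub_def)

lemma bar_iff: "y \<in> bar f x \<longleftrightarrow> y \<in> chars f \<and> csub y x \<in> X0 f"
  by (simp add: bar_def)

lemma bar_self: "x \<in> chars f \<Longrightarrow> x \<in> bar f x"
  by (simp add: bar_iff X0_def chars_def csub_def)

lemma bar_eq_iff:
  assumes x: "x \<in> chars f" and y: "y \<in> chars f"
  shows "bar f x = bar f y \<longleftrightarrow> (\<exists>c. \<forall>i<f. \<forall>j<3. x i j - y i j = c i)"
proof
  assume "bar f x = bar f y"
  then have "x \<in> bar f y"
    using bar_self[OF x] by simp
  then show "\<exists>c. \<forall>i<f. \<forall>j<3. x i j - y i j = c i"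
    using x y by (simp add: bar_iff csub_X0_iff)
next
  assume "\<exists>c. \<forall>i<f. \<forall>j<3. x i j - y i j = c i"
  then obtain c where c: "\<forall>i<f. \<forall>j<3. x i j - y i j = c i" ..
  have shift: "(\<exists>d. \<forall>i<f. \<forall>j<3. z i j - x i j = d i) \<longleftrightarrow> (\<exists>d. \<forall>i<f. \<forall>j<3. z i j - y i j = d i)"
    for z :: "nat \<Rightarrow> nat \<Rightarrow> int"
  proof
    assume "\<exists>d. \<forall>i<f. \<forall>j<3. z i j - x i j = d i"
    then obtain d where "\<forall>i<f. \<forall>j<3. z i j - x i j = d i" ..
    with c have "\<forall>i<f. \<forall>j<3. z i j - y i j = d i + c i"
      by (metis add_diff_cancel_left' add_diff_eq diff_add_cancel)
    then show "\<exists>d. \<forall>i<f. \<forall>j<3. z i j - y i j = d i"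
      by (rule exI[of _ "\<lambda>i. d i + c i"])
  next
    assume "\<exists>d. \<forall>i<f. \<forall>j<3. z i j - y i j = d i"
    then obtain d where "\<forall>i<f. \<forall>j<3. z i j - y i j = d i" ..
    with c have "\<forall>i<f. \<forall>j<3. z i j - x i j = d i - c i"
      by (metis diff_diff_eq2 diff_add_cancel add_diff_eq)
    then show "\<exists>d. \<forall>i<f. \<forall>j<3. z i j - x i j = d i"
      by (rule exI[of _ "\<lambda>i. d i - c i"])
  qed
  show "bar f x = bar f y"
  proof (rule set_eqI)
    fix z
    show "z \<in> bar f x \<longleftrightarrow> z \<in> bar f y"
      using shift[of z] x y by (cases "z \<in> chars f") (simp_all add: bar_iff csub_X0_iff)
  qed
qed

lemma bar_eq_of_mem: "x \<in> chars f \<Longrightarrow> r \<in> bar f x \<Longrightarrow> bar f r = bar f x"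
  by (subst bar_eq_iff) (auto simp: bar_iff csub_X0_iff)

lemma bar_eq_imp_3_dvd_row_sum_diff:
  assumes "x \<in> chars f" "y \<in> chars f" "bar f x = bar f y" "i < f"
  shows "3 dvd (x i 0 + x i 1 + x i 2 - (y i 0 + y i 1 + y i 2))"
proof -
  obtain c where "\<forall>i<f. \<forall>j<3. x i j - y i j = c i"
    using assms by (auto simp: bar_eq_iff)
  with \<open>i < f\<close> have "x i 0 - y i 0 = c i" "x i 1 - y i 1 = c i" "x i 2 - y i 2 = c i"
    by auto
  then have "x i 0 + x i 1 + x i 2 - (y i 0 + y i 1 + y i 2) = 3 * c i"
    by linarith
  then show ?thesis
    by simp
qed

lemma LamW_obtain:
  assumes "\<omega> \<in> LamW f"
  obtains L where "L \<in> chars f" "\<omega> = bar f L"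
  using assms by (auto simp: LamW_def)

lemma wadd_bar:
  assumes x: "x \<in> chars f" and y: "y \<in> chars f"
  shows "wadd (bar f x) (bar f y) = bar f (cadd x y)"
proof (rule set_eqI)
  fix z
  show "z \<in> wadd (bar f x) (bar f y) \<longleftrightarrow> z \<in> bar f (cadd x y)"
  proof
    assume "z \<in> wadd (bar f x) (bar f y)"
    then obtain a b where z: "z = cadd a b" and a: "a \<in> bar f x" and b: "b \<in> bar f y"
      by (auto simp: wadd_def)
    have ac: "a \<in> chars f" and bc: "b \<in> chars f"
      using a b by (auto simp: bar_iff)
    obtain c where "\<forall>i<f. \<forall>j<3. a i j - x i j = c i"
      using a x ac by (auto simp: bar_iff csub_X0_iff)
    moreover obtain d where "\<forall>i<f. \<forall>j<3. b i j - y i j = d i"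
      using b y bc by (auto simp: bar_iff csub_X0_iff)
    ultimately have "\<forall>i<f. \<forall>j<3. cadd a b i j - cadd x y i j = c i + d i"
      by (simp add: cadd_def algebra_simps)
    then have "\<exists>e. \<forall>i<f. \<forall>j<3. cadd a b i j - cadd x y i j = e i"
      by (rule exI[of _ "\<lambda>i. c i + d i"])
    then show "z \<in> bar f (cadd x y)"
      unfolding z using ac bc x y by (simp add: bar_iff csub_X0_iff cadd_chars)
  next
    assume z: "z \<in> bar f (cadd x y)"
    have zc: "z \<in> chars f"
      using z by (simp add: bar_iff)
    obtain c where "\<forall>i<f. \<forall>j<3. z i j - cadd x y i j = c i"
      using z x y zc by (auto simp: bar_iff csub_X0_iff cadd_chars)
    then have "\<forall>i<f. \<forall>j<3. csub z y i j - x i j = c i"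
      by (simp add: cadd_def csub_def algebra_simps)
    then have "\<exists>e. \<forall>i<f. \<forall>j<3. csub z y i j - x i j = e i"
      by (rule exI[of _ c])
    then have "csub z y \<in> bar f x"
      using zc x y by (simp add: bar_iff csub_X0_iff csub_chars)
    moreover have "z = cadd (csub z y) y"
      by (simp add: cadd_def csub_def)
    ultimately show "z \<in> wadd (bar f x) (bar f y)"
      using bar_self[OF y] unfolding wadd_def by blast
  qed
qed

lemma rootchars_row_sum: "a \<in> rootchars f \<Longrightarrow> i < f \<Longrightarrow> a i 0 + a i 1 + a i 2 = 0"
  by (simp add: rootchars_def)

lemma rootchars_bar_inj:
  assumes a: "a \<in> rootchars f" and b: "b \<in> rootchars f" and e: "bar f a = bar f b"
  shows "a = b"
proof (intro ext)
  fix i j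
  have ac: "a \<in> chars f" and bc: "b \<in> chars f"
    using a b by (auto simp: rootchars_def)
  obtain c where c: "\<forall>i<f. \<forall>j<3. a i j - b i j = c i"
    using e ac bc by (auto simp: bar_eq_iff)
  show "a i j = b i j"
  proof (cases "i < f \<and> j < 3")
    case True
    have "a i 0 - b i 0 = c i" "a i 1 - b i 1 = c i" "a i 2 - b i 2 = c i"
      using c True by auto
    moreover have "a i 0 + a i 1 + a i 2 = 0" "b i 0 + b i 1 + b i 2 = 0"
      using a b True by (auto simp: rootchars_def)
    ultimately have "c i = 0"
      by linarith
    then show ?thesis
      using c True by force
  next
    case False
    then show ?thesis
      using ac bc by (auto simp: charsD)
  qed
qed

lemma can_rootchars:
  assumes "\<nu> \<in> LamR f"
  shows "can f \<nu> \<in> rootchars f" and "bar f (can f \<nu>) = \<nu>"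
proof -
  obtain a where "a \<in> rootchars f" "\<nu> = bar f a"
    using assms by (auto simp: LamR_def)
  then have "\<exists>!x. x \<in> rootchars f \<and> bar f x = \<nu>"
    using rootchars_bar_inj by blast
  then have "can f \<nu> \<in> rootchars f \<and> bar f (can f \<nu>) = \<nu>"
    unfolding can_def by (rule theI')
  then show "can f \<nu> \<in> rootchars f" and "bar f (can f \<nu>) = \<nu>"
    by simp_all
qed

lemma rootchars_chars: "a \<in> rootchars f \<Longrightarrow> a \<in> chars f"
  by (simp add: rootchars_def)

section \<open>Weyl group and Frobenius\<close>

lemma mod_succ_of_pred: "i < (f::nat) \<Longrightarrow> ((i + f - 1) mod f + 1) mod f = i"
proof (cases "i = 0")
  case False
  moreover assume "i < f"
  ultimately have "(i + f - 1) mod f = i - 1"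
    by (simp add: mod_if)
  with \<open>i < f\<close> False show ?thesis
    by simp
qed (simp add: mod_if)

lemma mod_pred_of_succ: "i < (f::nat) \<Longrightarrow> ((i + 1) mod f + f - 1) mod f = i"
  by (cases "i + 1 = f") simp_all

lemma permutes3_lt: "u permutes {0..<3} \<Longrightarrow> m < 3 \<Longrightarrow> u m < (3::nat)"
  using permutes_in_image[of u "{0..<3}" m] by simp

lemma permutes3_inv_lt: "u permutes {0..<3} \<Longrightarrow> m < 3 \<Longrightarrow> inv u m < (3::nat)"
  using permutes3_lt[OF permutes_inv] by blast

lemma permutes3_fix: "u permutes {0..<3} \<Longrightarrow> 3 \<le> m \<Longrightarrow> u m = (m::nat)"
  using permutes_not_in[of u "{0..<3}" m] by simp

lemma permutes3_inv_fix: "u permutes {0..<3} \<Longrightarrow> 3 \<le> m \<Longrightarrow> inv u m = (m::nat)"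
  using permutes3_fix[OF permutes_inv] by blast

lemma sum3_distinct:
  fixes g :: "nat \<Rightarrow> 'a::comm_monoid_add"
  assumes "a < 3" "b < 3" "c < 3" "a \<noteq> b" "a \<noteq> c" "b \<noteq> c"
  shows "g a + g b + g c = g 0 + g 1 + g 2"
proof -
  have "{a, b, c} = {0, 1, 2::nat}"
    using assms by (intro card_subset_eq) auto
  then have "sum g {a, b, c} = sum g {0, 1, 2}"
    by simp
  then show ?thesis
    using assms by (simp add: add.assoc)
qed

lemma sum3_permutes_inv:
  fixes g :: "nat \<Rightarrow> 'a::comm_monoid_add"
  assumes u: "u permutes {0..<3}"
  shows "g (inv u 0) + g (inv u 1) + g (inv u 2) = g 0 + g 1 + g 2"
proof (rule sum3_distinct)
  have "inj (inv u)"
    using permutes_inj[OF permutes_inv[OF u]] .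
  then show "inv u 0 \<noteq> inv u 1" "inv u 0 \<noteq> inv u 2" "inv u 1 \<noteq> inv u 2"
    by (simp_all add: inj_eq)
qed (use permutes3_inv_lt[OF u] in simp_all)

lemma WgrpD: "w \<in> Wgrp f \<Longrightarrow> w i permutes {0..<3}"
  by (simp add: Wgrp_def)

lemma WgrpD_id: "w \<in> Wgrp f \<Longrightarrow> f \<le> i \<Longrightarrow> w i = id"
  by (simp add: Wgrp_def)

lemma dot_apply: "dot f p w lam x i j =
    of_nat p * of_int (lam i (inv (w i) j)) + x i (inv (w i) j) + eta f i (inv (w i) j) - eta f i j"
  by (simp add: dot_def csub_def wact_def cadd_def cscale_def cofint_def)

lemma dot_chars:
  assumes w: "w \<in> Wgrp f" and lam: "lam \<in> chars f" and x: "x \<in> chars f"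
  shows "dot f p w lam x \<in> chars f"
proof (rule charsI)
  fix i j :: nat
  assume "f \<le> i \<or> 3 \<le> j"
  then consider "f \<le> i" | "i < f" "3 \<le> j"
    by linarith
  then show "dot f p w lam x i j = 0"
  proof cases
    case 1
    then show ?thesis
      using x lam by (simp add: dot_apply WgrpD_id[OF w] charsD eta_apply)
  next
    case 2
    then show ?thesis
      using x lam by (simp add: dot_apply permutes3_inv_fix[OF WgrpD[OF w]] charsD eta_apply)
  qed
qed

lemma piCinv_chars: "x \<in> chars f \<Longrightarrow> piCinv f x \<in> chars f"
  by (rule charsI) (auto simp: piCinv_def charsD)

lemma piC_chars: "x \<in> chars f \<Longrightarrow> piC f x \<in> chars f"
  by (rule charsI) (auto simp: piC_def charsD)

lemma piCinv_piC: "0 < f \<Longrightarrow> x \<in> chars f \<Longrightarrow> piCinv f (piC f x) = x"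
  by (intro ext) (use mod_pred_of_succ in \<open>auto simp: piCinv_def piC_def charsD\<close>)

lemma piCinv_bar:
  assumes f: "0 < f" and L: "L \<in> chars f"
  shows "piCinv f ` bar f L = bar f (piCinv f L)"
proof (rule set_eqI)
  fix y
  show "y \<in> piCinv f ` bar f L \<longleftrightarrow> y \<in> bar f (piCinv f L)"
  proof
    assume "y \<in> piCinv f ` bar f L"
    then obtain r where y: "y = piCinv f r" and r: "r \<in> bar f L"
      by blast
    have rc: "r \<in> chars f"
      using r by (simp add: bar_iff)
    obtain d where "\<forall>i<f. \<forall>j<3. r i j - L i j = d i"
      using r rc L by (auto simp: bar_iff csub_X0_iff)
    then have "\<forall>i<f. \<forall>j<3. piCinv f r i j - piCinv f L i j = d ((i + 1) mod f)"
      using f by (simp add: piCinv_def)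
    then have "\<exists>e. \<forall>i<f. \<forall>j<3. piCinv f r i j - piCinv f L i j = e i"
      by (rule exI[of _ "\<lambda>i. d ((i + 1) mod f)"])
    then show "y \<in> bar f (piCinv f L)"
      unfolding y using rc L by (simp add: bar_iff csub_X0_iff piCinv_chars)
  next
    assume y: "y \<in> bar f (piCinv f L)"
    have yc: "y \<in> chars f"
      using y by (simp add: bar_iff)
    obtain d where d: "\<forall>i<f. \<forall>j<3. y i j - piCinv f L i j = d i"
      using y yc L by (auto simp: bar_iff csub_X0_iff piCinv_chars)
    have "piC f y i j - L i j = d ((i + f - 1) mod f)" if "i < f" "j < 3" for i j
      using d[rule_format, of "(i + f - 1) mod f" j] that f mod_succ_of_pred[of i f]
      by (simp add: piC_def piCinv_def)
    then have "\<exists>e. \<forall>i<f. \<forall>j<3. piC f y i j - L i j = e i"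
      by (intro exI[of _ "\<lambda>i. d ((i + f - 1) mod f)"] allI impI)
    then have "piC f y \<in> bar f L"
      using yc L by (simp add: bar_iff csub_X0_iff piC_chars)
    then show "y \<in> piCinv f ` bar f L"
      using piCinv_piC[OF f yc] by force
  qed
qed

lemma piW_Wgrp: "0 < f \<Longrightarrow> w \<in> Wgrp f \<Longrightarrow> piW f w \<in> Wgrp f"
  by (auto simp: Wgrp_def piW_def)

lemma piW_inj:
  assumes f: "0 < f" and w: "w \<in> Wgrp f" and w': "w' \<in> Wgrp f" and e: "piW f w = piW f w'"
  shows "w = w'"
proof
  fix i
  show "w i = w' i"
  proof (cases "i < f")
    case True
    have "piW f w ((i + 1) mod f) = piW f w' ((i + 1) mod f)"
      using e by simp
    then show ?thesis
      using True f mod_pred_of_succ[of i f] by (simp add: piW_def)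
  next
    case False
    then show ?thesis
      using WgrpD_id[OF w] WgrpD_id[OF w'] by simp
  qed
qed

section \<open>Alcoves in one embedding\<close>

definition in_lower :: "real \<Rightarrow> (nat \<Rightarrow> real) \<Rightarrow> bool" where
  "in_lower P y \<longleftrightarrow> 0 < y 0 - y 1 \<and> 0 < y 1 - y 2 \<and> y 0 - y 2 < P"

definition in_upper :: "real \<Rightarrow> (nat \<Rightarrow> real) \<Rightarrow> bool" where
  "in_upper P y \<longleftrightarrow> y 0 - y 1 < P \<and> y 1 - y 2 < P \<and> P < y 0 - y 2"

definition in_alcove :: "real \<Rightarrow> bool \<Rightarrow> (nat \<Rightarrow> real) \<Rightarrow> bool" where
  "in_alcove P b y = (if b then in_upper P y else in_lower P y)"

text \<open>In the shifted coordinates \<open>y = x + \<eta>\<close> of one embedding, the \<open>p\<close>-dot action of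
  \<open>u t\<^bsub>-\<sigma>\<^esub>\<close> is \<open>y \<mapsto> u (y - p \<sigma>)\<close>.\<close>

definition maps_lower_onto :: "real \<Rightarrow> bool \<Rightarrow> (nat \<Rightarrow> nat) \<Rightarrow> (nat \<Rightarrow> int) \<Rightarrow> bool" where
  "maps_lower_onto P b u \<sigma> \<longleftrightarrow> u permutes {0..<3} \<and>
     (\<forall>y. in_lower P y \<longrightarrow> in_alcove P b (\<lambda>j. y (inv u j) - P * of_int (\<sigma> (inv u j)))) \<and>
     (\<forall>z. in_alcove P b z \<longrightarrow> in_lower P (\<lambda>m. z (u m) + P * of_int (\<sigma> m)))"

lemma alc_iff: "x \<in> alc f p c \<longleftrightarrow>
    x \<in> chars f \<and> (\<forall>i<f. in_alcove (real p) (c i) (\<lambda>j. x i j + eta f i j))"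
  by (simp add: alc_def in_alcove_def in_lower_def in_upper_def cadd_def)

lemma lowA_iff: "x \<in> lowA f p \<longleftrightarrow>
    x \<in> chars f \<and> (\<forall>i<f. in_lower (real p) (\<lambda>j. x i j + eta f i j))"
  by (simp add: lowA_def alc_iff in_alcove_def)

lemma in_alcove_cong:
  "y 0 = y' 0 \<Longrightarrow> y 1 = y' 1 \<Longrightarrow> y 2 = y' 2 \<Longrightarrow> in_alcove P b y = in_alcove P b y'"
  by (simp add: in_alcove_def in_lower_def in_upper_def)

lemma in_lower_cong: "y 0 = y' 0 \<Longrightarrow> y 1 = y' 1 \<Longrightarrow> y 2 = y' 2 \<Longrightarrow> in_lower P y = in_lower P y'"
  by (simp add: in_lower_def)

lemma in_lower_shift: "in_lower P (\<lambda>m. y m + d) = in_lower P y"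
  by (simp add: in_lower_def)

lemma maps_lower_onto_cong:
  assumes "\<And>m. m < 3 \<Longrightarrow> \<sigma> m = \<sigma>' m" and u: "u permutes {0..<3}"
  shows "maps_lower_onto P b u \<sigma> = maps_lower_onto P b u \<sigma>'"
proof -
  have "\<sigma> (inv u j) = \<sigma>' (inv u j)" if "j < 3" for j
    using assms(1) permutes3_inv_lt[OF u that] by blast
  then have "in_alcove P b (\<lambda>j. y (inv u j) - P * of_int (\<sigma> (inv u j))) =
      in_alcove P b (\<lambda>j. y (inv u j) - P * of_int (\<sigma>' (inv u j)))" for y
    by (intro in_alcove_cong) simp_all
  moreover have "in_lower P (\<lambda>m. z (u m) + P * of_int (\<sigma> m)) =
      in_lower P (\<lambda>m. z (u m) + P * of_int (\<sigma>' m))" for z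
    by (intro in_lower_cong) (simp_all add: assms(1))
  ultimately show ?thesis
    unfolding maps_lower_onto_def by simp
qed

text \<open>Each of the two alcoves is the image of the lower one under three elements of the
  extended affine Weyl group of \<open>SL\<^sub>3\<close>, one in each class of \<open>\<Lambda>\<^sub>W/\<Lambda>\<^sub>R \<cong> \<int>/3\<close>; the class
  is the row sum of \<open>\<sigma>\<close> modulo 3.\<close>

lemma maps_lower_onto_lower_exists:
  "\<exists>u \<sigma>. maps_lower_onto P False u \<sigma> \<and> (\<sigma> 0 + \<sigma> 1 + \<sigma> 2) mod 3 = k mod 3"
proof -
  have t02: "transpose (0::nat) 2 permutes {0..<3}" and t01: "transpose (0::nat) 1 permutes {0..<3}"
    by (auto intro: permutes_swap_id)
  have "k mod 3 = 0 \<or> k mod 3 = 1 \<or> k mod 3 = 2"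
    by presburger
  then consider "k mod 3 = 0" | "k mod 3 = 1" | "k mod 3 = 2"
    by blast
  then show ?thesis
  proof cases
    case 1
    have "maps_lower_onto P False id (\<lambda>m. 0)"
      by (simp add: maps_lower_onto_def in_alcove_def)
    with 1 show ?thesis
      by fastforce
  next
    case 2
    let ?u = "transpose 0 1 \<circ> transpose (0::nat) 2"
    have u: "?u permutes {0..<3}"
      using permutes_compose[OF t02 t01] .
    have "?u 0 = 2" "?u 1 = 0" "?u 2 = 1" "inv ?u 0 = 1" "inv ?u 1 = 2" "inv ?u 2 = 0"
      using permutes_inv_eq[OF u] by simp_all
    then have "maps_lower_onto P False ?u (\<lambda>m. if m = 0 then 1 else 0)"
      using u by (auto simp: maps_lower_onto_def in_alcove_def in_lower_def)
    with 2 show ?thesis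
      by fastforce
  next
    case 3
    let ?u = "transpose 0 2 \<circ> transpose (0::nat) 1"
    have u: "?u permutes {0..<3}"
      using permutes_compose[OF t01 t02] .
    have "?u 0 = 1" "?u 1 = 2" "?u 2 = 0" "inv ?u 0 = 2" "inv ?u 1 = 0" "inv ?u 2 = 1"
      using permutes_inv_eq[OF u] by simp_all
    then have "maps_lower_onto P False ?u (\<lambda>m. if m = 2 then 0 else 1)"
      using u by (auto simp: maps_lower_onto_def in_alcove_def in_lower_def)
    with 3 show ?thesis
      by fastforce
  qed
qed

lemma maps_lower_onto_upper_exists:
  "\<exists>u \<sigma>. maps_lower_onto P True u \<sigma> \<and> (\<sigma> 0 + \<sigma> 1 + \<sigma> 2) mod 3 = k mod 3"
proof -
  have "k mod 3 = 0 \<or> k mod 3 = 1 \<or> k mod 3 = 2"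
    by presburger
  then consider "k mod 3 = 0" | "k mod 3 = 1" | "k mod 3 = 2"
    by blast
  then show ?thesis
  proof cases
    case 1
    let ?u = "transpose (0::nat) 2"
    have u: "?u permutes {0..<3}"
      by (auto intro: permutes_swap_id)
    have "?u 0 = 2" "?u 1 = 1" "?u 2 = 0" "inv ?u 0 = 2" "inv ?u 1 = 1" "inv ?u 2 = 0"
      using permutes_inv_eq[OF u] by simp_all
    then have "maps_lower_onto P True ?u (\<lambda>m. if m = 0 then 1 else if m = 2 then -1 else 0)"
      using u by (auto simp: maps_lower_onto_def in_alcove_def in_lower_def in_upper_def)
    with 1 show ?thesis
      by fastforce
  next
    case 2
    let ?u = "transpose (1::nat) 2"
    have u: "?u permutes {0..<3}"
      by (auto intro: permutes_swap_id)
    have "?u 0 = 0" "?u 1 = 2" "?u 2 = 1" "inv ?u 0 = 0" "inv ?u 1 = 2" "inv ?u 2 = 1"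
      using permutes_inv_eq[OF u] by simp_all
    then have "maps_lower_onto P True ?u (\<lambda>m. if m = 1 then 1 else 0)"
      using u by (auto simp: maps_lower_onto_def in_alcove_def in_lower_def in_upper_def)
    with 2 show ?thesis
      by fastforce
  next
    case 3
    let ?u = "transpose (0::nat) 1"
    have u: "?u permutes {0..<3}"
      by (auto intro: permutes_swap_id)
    have "?u 0 = 1" "?u 1 = 0" "?u 2 = 2" "inv ?u 0 = 1" "inv ?u 1 = 0" "inv ?u 2 = 2"
      using permutes_inv_eq[OF u] by simp_all
    then have "maps_lower_onto P True ?u (\<lambda>m. if m = 1 then 0 else 1)"
      using u by (auto simp: maps_lower_onto_def in_alcove_def in_lower_def in_upper_def)
    with 3 show ?thesis
      by fastforce
  qed
qed

lemma maps_lower_onto_exists: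
  "\<exists>u \<sigma>. maps_lower_onto P b u \<sigma> \<and> (\<sigma> 0 + \<sigma> 1 + \<sigma> 2) mod 3 = k mod 3"
  using maps_lower_onto_lower_exists[of P k] maps_lower_onto_upper_exists[of P k] by (cases b) simp_all

lemma alcimg_bar_lowA_subset:
  assumes U: "U \<in> Wgrp f" and S: "S \<in> chars f"
    and maps: "\<And>i. i < f \<Longrightarrow> maps_lower_onto (real p) (c i) (U i) (S i)"
  shows "alcimg f p U (bar f S) (lowA f p) \<subseteq> alc f p c"
proof
  fix z
  assume "z \<in> alcimg f p U (bar f S) (lowA f p)"
  then obtain x r where z: "z = dot f p U (cscale (-1) r) x" and x: "x \<in> lowA f p"
    and r: "r \<in> bar f S"
    unfolding alcimg_def by blast
  have xc: "x \<in> chars f" and xA: "\<And>i. i < f \<Longrightarrow> in_lower (real p) (\<lambda>j. x i j + eta f i j)"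
    using x by (auto simp: lowA_iff)
  have rc: "r \<in> chars f"
    using r by (simp add: bar_iff)
  obtain d where d: "\<forall>i<f. \<forall>j<3. r i j - S i j = d i"
    using r rc S by (auto simp: bar_iff csub_X0_iff)
  have zc: "z \<in> chars f"
    unfolding z using rc xc by (intro dot_chars U) (auto simp: chars_def cscale_def)
  have "in_alcove (real p) (c i) (\<lambda>j. z i j + eta f i j)" if i: "i < f" for i
  proof -
    let ?u = "U i"
    let ?y = "\<lambda>m. x i m + eta f i m - real p * of_int (d i)"
    have "in_lower (real p) ?y"
      using xA[OF i] in_lower_shift[of "real p" "\<lambda>m. x i m + eta f i m" "- real p * of_int (d i)"]
      by simp
    then have "in_alcove (real p) (c i) (\<lambda>j. ?y (inv ?u j) - real p * of_int (S i (inv ?u j)))"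
      using maps[OF i] unfolding maps_lower_onto_def by blast
    moreover have eqs: "?y (inv ?u j) - real p * of_int (S i (inv ?u j)) = z i j + eta f i j"
      if j: "j < 3" for j
    proof -
      have "r i (inv ?u j) = S i (inv ?u j) + d i"
        using d[rule_format, OF i permutes3_inv_lt[OF WgrpD[OF U, of i] j]] by simp
      then show ?thesis
        unfolding z dot_apply by (simp add: cscale_def algebra_simps)
    qed
    ultimately show ?thesis
      by (rule in_alcove_cong[THEN iffD1, rotated -1]) (use eqs[of 0] eqs[of 1] eqs[of 2] in simp_all)
  qed
  with zc show "z \<in> alc f p c"
    by (simp add: alc_iff)
qed

lemma alc_subset_alcimg_bar_lowA:
  assumes U: "U \<in> Wgrp f" and S: "S \<in> chars f"
    and maps: "\<And>i. i < f \<Longrightarrow> maps_lower_onto (real p) (c i) (U i) (S i)"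
  shows "alc f p c \<subseteq> alcimg f p U (bar f S) (lowA f p)"
proof
  fix z
  assume "z \<in> alc f p c"
  then have zc: "z \<in> chars f" and zC: "\<And>i. i < f \<Longrightarrow> in_alcove (real p) (c i) (\<lambda>j. z i j + eta f i j)"
    by (auto simp: alc_iff)
  define x :: "nat \<Rightarrow> nat \<Rightarrow> real" where
    "x = (\<lambda>i m. if i < f \<and> m < 3
       then z i (U i m) + eta f i (U i m) + real p * of_int (S i m) - eta f i m else 0)"
  have "in_lower (real p) (\<lambda>j. x i j + eta f i j)" if i: "i < f" for i
  proof -
    have "in_lower (real p) (\<lambda>m. z i (U i m) + eta f i (U i m) + real p * of_int (S i m))"
      using maps[OF i] zC[OF i] unfolding maps_lower_onto_def by blast
    then show ?thesis
      by (rule in_lower_cong[THEN iffD1, rotated -1]) (simp_all add: x_def i)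
  qed
  moreover have "x \<in> chars f"
    by (rule charsI) (auto simp: x_def)
  ultimately have xA: "x \<in> lowA f p"
    by (simp add: lowA_iff)
  have "dot f p U (cscale (-1) S) x i j = z i j" for i j
  proof (cases "i < f \<and> j < 3")
    case True
    have "inv (U i) j < 3" "U i (inv (U i) j) = j"
      using permutes3_inv_lt[OF WgrpD[OF U]] permutes_inverses(1)[OF WgrpD[OF U]] True by auto
    then show ?thesis
      using True by (simp add: dot_apply x_def cscale_def)
  next
    case False
    then consider "f \<le> i" | "i < f" "3 \<le> j"
      by linarith
    then show ?thesis
      by cases (use zc S in \<open>simp_all add: dot_apply WgrpD_id[OF U] permutes3_inv_fix[OF WgrpD[OF U]]
                   charsD eta_apply cscale_def x_def\<close>)
  qed
  then have "dot f p U (cscale (-1) S) x = z"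
    by blast
  then show "z \<in> alcimg f p U (bar f S) (lowA f p)"
    unfolding alcimg_def using xA bar_self[OF S] by force
qed

lemma alcimg_bar_lowA:
  assumes "U \<in> Wgrp f" and "S \<in> chars f"
    and "\<And>i. i < f \<Longrightarrow> maps_lower_onto (real p) (c i) (U i) (S i)"
  shows "alcimg f p U (bar f S) (lowA f p) = alc f p c"
  using alcimg_bar_lowA_subset[OF assms] alc_subset_alcimg_bar_lowA[OF assms] by (rule equalityI)

lemma lower_points_congruent_mod_p:
  fixes t1 t2 :: "nat \<Rightarrow> real" and q :: "nat \<Rightarrow> nat" and k :: "nat \<Rightarrow> int"
  assumes p: "P > 0"
    and q: "q 0 < 3" "q 1 < 3" "q 2 < 3" "q 0 \<noteq> q 1" "q 0 \<noteq> q 2" "q 1 \<noteq> q 2"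
    and t1: "in_lower P t1" and t2: "in_lower P t2"
    and eq: "\<And>m. m < 3 \<Longrightarrow> t1 m - t2 (q m) = P * of_int (k m)"
    and dvd: "3 dvd (k 0 + k 1 + k 2)"
  shows "q 0 = 0 \<and> q 1 = 1 \<and> q 2 = 2 \<and> k 0 = k 1 \<and> k 1 = k 2"
proof -
  have w1: "t1 1 < t1 0" "t1 2 < t1 1" "t1 0 - t1 2 < P"
    and w2: "t2 1 < t2 0" "t2 2 < t2 1" "t2 0 - t2 2 < P"
    using t1 t2 by (auto simp: in_lower_def)
  have spread2: "\<bar>t2 a - t2 b\<bar> < P" if "a < 3" "b < 3" for a b
    using that w2 less_3_cases[of a] less_3_cases[of b] by auto
  have close: "\<bar>k a - k b\<bar> \<le> 1" if ab: "a < 3" "b < 3" "\<bar>t1 a - t1 b\<bar> < P" for a b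
  proof -
    have "t1 a - t1 b - (t2 (q a) - t2 (q b)) = P * of_int (k a - k b)"
      using eq[OF ab(1)] eq[OF ab(2)] by (simp add: algebra_simps)
    moreover have "\<bar>t2 (q a) - t2 (q b)\<bar> < P"
      using spread2 ab q less_3_cases[of a] less_3_cases[of b] by auto
    ultimately have "\<bar>P * of_int (k a - k b)\<bar> < 2 * P"
      using ab(3) by linarith
    then have "P * \<bar>of_int (k a - k b)\<bar> < P * 2"
      using p by (simp add: abs_mult)
    then have "\<bar>of_int (k a - k b)\<bar> < (2::real)"
      using p by simp
    then show ?thesis
      by linarith
  qed
  have "\<bar>k 0 - k 1\<bar> \<le> 1" "\<bar>k 0 - k 2\<bar> \<le> 1" "\<bar>k 1 - k 2\<bar> \<le> 1"
    using w1 by (auto intro!: close)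
  with dvd have k: "k 0 = k 1 \<and> k 1 = k 2"
    by presburger
  have "t2 (q 1) < t2 (q 0)" "t2 (q 2) < t2 (q 1)"
    using w1 eq[of 0] eq[of 1] eq[of 2] k by auto
  then have "q 0 < q 1" "q 1 < q 2"
    using q w2 less_3_cases[of "q 0"] less_3_cases[of "q 1"] less_3_cases[of "q 2"] by auto
  then show ?thesis
    using q k by linarith
qed

lemma lower_points_same_affine_image:
  fixes u u' :: "nat \<Rightarrow> nat" and t1 t2 :: "nat \<Rightarrow> real" and s1 s2 :: "nat \<Rightarrow> int"
  assumes u: "u permutes {0..<3}" and u': "u' permutes {0..<3}" and p: "P > 0"
    and t1: "in_lower P t1" and t2: "in_lower P t2"
    and eq: "\<And>j. j < 3 \<Longrightarrow> t1 (inv u j) - P * of_int (s1 (inv u j)) =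
                          t2 (inv u' j) - P * of_int (s2 (inv u' j))"
    and dvd: "3 dvd (s1 0 + s1 1 + s1 2 - (s2 0 + s2 1 + s2 2))"
  shows "u = u'" and "\<forall>m<3. s1 m - s2 m = s1 0 - s2 0"
    and "\<forall>m<3. t1 m - t2 m = P * of_int (s1 0 - s2 0)"
proof -
  define q where "q m = inv u' (u m)" for m
  define k where "k m = s1 m - s2 (q m)" for m
  have q_lt: "q m < 3" if "m < 3" for m
    unfolding q_def using permutes3_inv_lt[OF u' permutes3_lt[OF u that]] .
  have "inj (inv u' \<circ> u)"
    using permutes_inj[OF permutes_inv[OF u']] permutes_inj[OF u] by (rule inj_compose)
  then have "inj q"
    by (simp add: q_def[abs_def] comp_def)
  then have q_ne: "q 0 \<noteq> q 1" "q 0 \<noteq> q 2" "q 1 \<noteq> q 2"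
    by (simp_all add: inj_eq)
  have tk: "t1 m - t2 (q m) = P * of_int (k m)" if m: "m < 3" for m
    using eq[OF permutes3_lt[OF u m]]
    by (simp add: permutes_inverses(2)[OF u] q_def k_def algebra_simps)
  have "s2 (q 0) + s2 (q 1) + s2 (q 2) = s2 0 + s2 1 + s2 2"
    using q_lt q_ne by (intro sum3_distinct) simp_all
  then have "3 dvd (k 0 + k 1 + k 2)"
    using dvd by (simp add: k_def algebra_simps)
  then have "q 0 = 0 \<and> q 1 = 1 \<and> q 2 = 2 \<and> k 0 = k 1 \<and> k 1 = k 2"
    using lower_points_congruent_mod_p[OF p _ _ _ q_ne t1 t2 tk] q_lt by simp
  then have q_id: "q m = m" and k_const: "k m = k 0" if "m < 3" for m
    using that less_3_cases[of m] by auto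
  show "u = u'"
  proof
    fix m
    show "u m = u' m"
    proof (cases "m < 3")
      case True
      then have "inv u' (u m) = m"
        using q_id by (simp add: q_def)
      then show ?thesis
        by (simp add: permutes_inv_eq[OF u'])
    next
      case False
      then show ?thesis
        using permutes3_fix[OF u] permutes3_fix[OF u'] by simp
    qed
  qed
  show "\<forall>m<3. s1 m - s2 m = s1 0 - s2 0"
  proof (intro allI impI)
    fix m :: nat
    assume "m < 3"
    then show "s1 m - s2 m = s1 0 - s2 0"
      using k_const[of m] q_id[of m] q_id[of 0] by (simp add: k_def)
  qed
  show "\<forall>m<3. t1 m - t2 m = P * of_int (s1 0 - s2 0)"
  proof (intro allI impI)
    fix m :: nat
    assume "m < 3"
    then show "t1 m - t2 m = P * of_int (s1 0 - s2 0)"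
      using tk[of m] k_const[of m] q_id[of m] q_id[of 0] by (simp add: k_def)
  qed
qed

section \<open>The decomposition underlying \<open>Trns\<close>\<close>

lemma maps_lower_onto_family:
  fixes L :: "nat \<Rightarrow> nat \<Rightarrow> int"
  obtains U S where "U \<in> Wgrp f" "S \<in> chars f"
    and "\<And>i. i < f \<Longrightarrow> maps_lower_onto (real p) (c i) (U i) (S i)"
    and "\<And>i. i < f \<Longrightarrow> (S i 0 + S i 1 + S i 2) mod 3 = (L i 0 + L i 1 + L i 2) mod 3"
proof -
  have "\<forall>i. \<exists>x. maps_lower_onto (real p) (c i) (fst x) (snd x) \<and>
      (snd x 0 + snd x 1 + snd x 2) mod 3 = (L i 0 + L i 1 + L i 2) mod 3"
    using maps_lower_onto_exists by fastforce
  then obtain X where X: "\<And>i. maps_lower_onto (real p) (c i) (fst (X i)) (snd (X i)) \<and>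
      (snd (X i) 0 + snd (X i) 1 + snd (X i) 2) mod 3 = (L i 0 + L i 1 + L i 2) mod 3"
    by metis
  define U where "U i = (if i < f then fst (X i) else id)" for i
  define S where "S i j = (if i < f \<and> j < 3 then snd (X i) j else 0)" for i j
  have U_perm: "U i permutes {0..<3}" for i
    using X[of i] by (auto simp: U_def maps_lower_onto_def)
  show thesis
  proof
    show "U \<in> Wgrp f"
      using U_perm by (auto simp: Wgrp_def U_def)
    show "S \<in> chars f"
      by (rule charsI) (auto simp: S_def)
    fix i
    assume i: "i < f"
    have "maps_lower_onto (real p) (c i) (U i) (S i) = maps_lower_onto (real p) (c i) (U i) (snd (X i))"
      by (rule maps_lower_onto_cong) (auto simp: S_def i U_perm)
    then show "maps_lower_onto (real p) (c i) (U i) (S i)"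
      using X[of i] i by (simp add: U_def)
    show "(S i 0 + S i 1 + S i 2) mod 3 = (L i 0 + L i 1 + L i 2) mod 3"
      using X[of i] i by (simp add: S_def)
  qed
qed

lemma rootchars_complement:
  fixes S L :: "nat \<Rightarrow> nat \<Rightarrow> int"
  assumes S: "S \<in> chars f" and L: "L \<in> chars f"
    and sums: "\<And>i. i < f \<Longrightarrow> (S i 0 + S i 1 + S i 2) mod 3 = (L i 0 + L i 1 + L i 2) mod 3"
  obtains a where "a \<in> rootchars f" "bar f (cadd S a) = bar f L"
proof -
  define q where "q i = (L i 0 + L i 1 + L i 2 - (S i 0 + S i 1 + S i 2)) div 3" for i
  define a where "a i j = (if i < f \<and> j < 3 then L i j - S i j - q i else 0)" for i j
  have "a i 0 + a i 1 + a i 2 = 0" if i: "i < f" for i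
  proof -
    have "3 dvd (L i 0 + L i 1 + L i 2 - (S i 0 + S i 1 + S i 2))"
      using sums[OF i, symmetric] by (simp only: mod_eq_dvd_iff)
    then have "3 * q i = L i 0 + L i 1 + L i 2 - (S i 0 + S i 1 + S i 2)"
      unfolding q_def by (rule dvd_mult_div_cancel)
    then show ?thesis
      using i by (simp add: a_def)
  qed
  moreover have ac: "a \<in> chars f"
    by (rule charsI) (auto simp: a_def)
  ultimately have "a \<in> rootchars f"
    by (simp add: rootchars_def)
  moreover have "\<forall>i<f. \<forall>j<3. cadd S a i j - L i j = - q i"
    by (simp add: cadd_def a_def)
  then have "bar f (cadd S a) = bar f L"
    using cadd_chars[OF S ac] L by (subst bar_eq_iff) (auto intro!: exI[of _ "\<lambda>i. - q i"])
  ultimately show thesis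
    by (rule that)
qed

definition Trns_decomp :: "nat \<Rightarrow> nat \<Rightarrow> (nat \<Rightarrow> nat \<Rightarrow> int) set \<Rightarrow> (nat \<Rightarrow> nat \<Rightarrow> real) set
    \<Rightarrow> (nat \<Rightarrow> nat \<Rightarrow> int) set \<Rightarrow> (nat \<Rightarrow> nat \<Rightarrow> int) set \<Rightarrow> (nat \<Rightarrow> nat \<Rightarrow> nat) \<Rightarrow> bool" where
  "Trns_decomp f p lam C \<omega> \<nu> w \<longleftrightarrow> (w, \<omega>) \<in> Wt1 f p \<and> \<nu> \<in> LamR f \<and> lam = wadd \<omega> \<nu> \<and>
     C = alcimg f p (piW f w) \<omega> (lowA f p)"

definition Trns_rep :: "nat \<Rightarrow> nat \<Rightarrow> (nat \<Rightarrow> nat \<Rightarrow> int) \<Rightarrow> ((nat \<Rightarrow> nat \<Rightarrow> int) set \<Rightarrow> nat \<Rightarrow> nat \<Rightarrow> int)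
    \<Rightarrow> (nat \<Rightarrow> nat \<Rightarrow> int) set \<Rightarrow> (nat \<Rightarrow> nat \<Rightarrow> int) set \<Rightarrow> (nat \<Rightarrow> nat \<Rightarrow> nat)
    \<Rightarrow> (nat \<Rightarrow> nat \<Rightarrow> int) set" where
  "Trns_rep f p \<mu> sec \<omega> \<nu> w = qcls f p (dot f p w (cscale (-1) (piCinv f (sec \<omega>)))
     (cadd (cadd (csub \<mu> (eta f)) (can f \<nu>)) (sec \<omega>)))"

lemma Trns_decomp_exists:
  assumes f: "0 < f" and lam: "lam \<in> LamW f" and C: "C \<in> Acal f p"
  obtains \<omega> \<nu> w where "Trns_decomp f p lam C \<omega> \<nu> w"
proof -
  obtain L where L: "L \<in> chars f" "lam = bar f L"
    using lam by (rule LamW_obtain)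
  obtain c where c: "C = alc f p c"
    using C by (auto simp: Acal_def)
  obtain U S where U: "U \<in> Wgrp f" and S: "S \<in> chars f"
    and maps: "\<And>i. i < f \<Longrightarrow> maps_lower_onto (real p) (c i) (U i) (S i)"
    and sums: "\<And>i. i < f \<Longrightarrow> (S i 0 + S i 1 + S i 2) mod 3 = (L i 0 + L i 1 + L i 2) mod 3"
    using maps_lower_onto_family[where f = f and p = p and c = c and L = L] by blast
  obtain a where a: "a \<in> rootchars f" "bar f (cadd S a) = bar f L"
    using S L(1) sums by (rule rootchars_complement)
  define w where "w i = (if i < f then U ((i + 1) mod f) else id)" for i
  have w: "w \<in> Wgrp f"
    using U by (auto simp: Wgrp_def w_def)
  have piW_w: "piW f w = U"
  proof
    fix i
    show "piW f w i = U i"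
      using f mod_succ_of_pred[of i f] WgrpD_id[OF U, of i] by (simp add: piW_def w_def)
  qed
  have "alcimg f p w (bar f (piCinv f S)) (lowA f p) = alc f p (\<lambda>i. c ((i + 1) mod f))"
  proof (rule alcimg_bar_lowA[OF w piCinv_chars[OF S]])
    fix i
    assume "i < f"
    then show "maps_lower_onto (real p) (c ((i + 1) mod f)) (w i) (piCinv f S i)"
      using maps[of "(i + 1) mod f"] f by (simp add: w_def piCinv_def fun_eq_iff)
  qed
  then have "(w, bar f S) \<in> Wt1 f p"
    using w S by (auto simp: Wt1_def LamW_def Acal_def piCinv_bar[OF f S])
  moreover have "bar f a \<in> LamR f"
    using a(1) by (simp add: LamR_def)
  moreover have "lam = wadd (bar f S) (bar f a)"
    using L(2) a wadd_bar[OF S rootchars_chars[OF a(1)]] by simp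
  moreover have "C = alcimg f p (piW f w) (bar f S) (lowA f p)"
    unfolding c piW_w by (rule alcimg_bar_lowA[OF U S maps, symmetric])
  ultimately show thesis
    by (intro that[of "bar f S" "bar f a" w]) (simp add: Trns_decomp_def)
qed

lemma lowA_nonempty:
  assumes "0 < p"
  shows "lowA f p \<noteq> {}"
proof -
  define x :: "nat \<Rightarrow> nat \<Rightarrow> real" where
    "x i j = (if i < f \<and> j < 3 then (real p / 4 - 1) * (1 - real j) else 0)" for i j
  have "in_lower (real p) (\<lambda>j. x i j + eta f i j)" if "i < f" for i
  proof -
    have "x i 0 + eta f i 0 = real p / 4" "x i 1 + eta f i 1 = 0" "x i 2 + eta f i 2 = - real p / 4"
      using that by (simp_all add: x_def eta_apply algebra_simps)
    then show ?thesis
      using assms by (simp add: in_lower_def)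
  qed
  moreover have "x \<in> chars f"
    by (rule charsI) (auto simp: x_def)
  ultimately have "x \<in> lowA f p"
    by (simp add: lowA_iff)
  then show ?thesis
    by blast
qed

lemma alcimg_lowA_inj:
  assumes p: "0 < p" and U: "U \<in> Wgrp f" and U': "U' \<in> Wgrp f"
    and L: "L \<in> chars f" and L': "L' \<in> chars f"
    and dvd: "\<And>i. i < f \<Longrightarrow> 3 dvd (L i 0 + L i 1 + L i 2 - (L' i 0 + L' i 1 + L' i 2))"
    and eq: "alcimg f p U (bar f L) (lowA f p) = alcimg f p U' (bar f L') (lowA f p)"
  shows "U = U'" and "bar f L = bar f L'"
proof -
  obtain x where x: "x \<in> lowA f p"
    using lowA_nonempty[OF p] by blast
  have "dot f p U (cscale (-1) L) x \<in> alcimg f p U (bar f L) (lowA f p)"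
    unfolding alcimg_def using x bar_self[OF L] by blast
  then have "dot f p U (cscale (-1) L) x \<in> alcimg f p U' (bar f L') (lowA f p)"
    by (simp only: eq)
  then obtain x' r where x': "x' \<in> lowA f p" and r: "r \<in> bar f L'"
    and image: "dot f p U (cscale (-1) L) x = dot f p U' (cscale (-1) r) x'"
    unfolding alcimg_def by blast
  have rc: "r \<in> chars f"
    using r by (simp add: bar_iff)
  have rL': "bar f r = bar f L'"
    using bar_eq_of_mem[OF L' r] .
  have embedding: "U i = U' i \<and> (\<forall>m<3. L i m - r i m = L i 0 - r i 0)" if i: "i < f" for i
  proof -
    have "L i 0 + L i 1 + L i 2 - (r i 0 + r i 1 + r i 2) =
        (L i 0 + L i 1 + L i 2 - (L' i 0 + L' i 1 + L' i 2)) -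
        (r i 0 + r i 1 + r i 2 - (L' i 0 + L' i 1 + L' i 2))"
      by linarith
    then have sums: "3 dvd (L i 0 + L i 1 + L i 2 - (r i 0 + r i 1 + r i 2))"
      using dvd_diff[OF dvd[OF i] bar_eq_imp_3_dvd_row_sum_diff[OF rc L' rL' i]] by (simp only:)
    have coords: "x i (inv (U i) j) + eta f i (inv (U i) j) - real p * of_int (L i (inv (U i) j)) =
        x' i (inv (U' i) j) + eta f i (inv (U' i) j) - real p * of_int (r i (inv (U' i) j))" for j
      using fun_cong[OF fun_cong[OF image, of i], of j] by (simp add: dot_apply cscale_def algebra_simps)
    have pos: "real p > 0"
      using p by simp
    have t: "in_lower (real p) (\<lambda>j. x i j + eta f i j)"
      and t': "in_lower (real p) (\<lambda>j. x' i j + eta f i j)"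
      using x x' i by (simp_all add: lowA_iff)
    show ?thesis
      using lower_points_same_affine_image(1,2)[OF WgrpD[OF U, of i] WgrpD[OF U', of i] pos t t' coords sums]
      by blast
  qed
  show "U = U'"
  proof
    fix i
    show "U i = U' i"
      using embedding[THEN conjunct1] WgrpD_id[OF U] WgrpD_id[OF U'] by (cases "i < f") auto
  qed
  have "\<forall>i<f. \<forall>m<3. L i m - r i m = L i 0 - r i 0"
    using embedding by blast
  then have "bar f L = bar f r"
    by (subst bar_eq_iff[OF L rc]) (rule exI[of _ "\<lambda>i. L i 0 - r i 0"])
  with rL' show "bar f L = bar f L'"
    by simp
qed

lemma bar_cadd_cancel:
  assumes x: "x \<in> chars f" and y: "y \<in> chars f" and z: "z \<in> chars f"
    and eq: "bar f (cadd x y) = bar f (cadd x z)"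
  shows "bar f y = bar f z"
proof -
  have "\<exists>c. \<forall>i<f. \<forall>j<3. cadd x y i j - cadd x z i j = c i"
    using eq bar_eq_iff[OF cadd_chars[OF x y] cadd_chars[OF x z]] by simp
  then obtain c where "\<forall>i<f. \<forall>j<3. cadd x y i j - cadd x z i j = c i"
    by blast
  then have "\<forall>i<f. \<forall>j<3. y i j - z i j = c i"
    by (simp add: cadd_def)
  then show ?thesis
    by (subst bar_eq_iff[OF y z]) (rule exI[of _ c])
qed

lemma Trns_decompD:
  assumes "Trns_decomp f p lam C \<omega> \<nu> w"
  shows "w \<in> Wgrp f" "\<omega> \<in> LamW f" "\<nu> \<in> LamR f" "lam = wadd \<omega> \<nu>"
    and "C = alcimg f p (piW f w) \<omega> (lowA f p)"
  using assms by (simp_all add: Trns_decomp_def Wt1_def)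

lemma Trns_decomp_unique:
  assumes f: "0 < f" and p: "0 < p"
    and d: "Trns_decomp f p lam C \<omega> \<nu> w" and d': "Trns_decomp f p lam C \<omega>' \<nu>' w'"
  shows "\<omega> = \<omega>' \<and> \<nu> = \<nu>' \<and> w = w'"
proof -
  obtain L where L: "L \<in> chars f" "\<omega> = bar f L"
    using Trns_decompD(2)[OF d] by (rule LamW_obtain)
  obtain L' where L': "L' \<in> chars f" "\<omega>' = bar f L'"
    using Trns_decompD(2)[OF d'] by (rule LamW_obtain)
  define a where "a = can f \<nu>"
  define a' where "a' = can f \<nu>'"
  have a: "a \<in> rootchars f" "bar f a = \<nu>" and a': "a' \<in> rootchars f" "bar f a' = \<nu>'"
    using can_rootchars Trns_decompD(3)[OF d] Trns_decompD(3)[OF d'] by (simp_all add: a_def a'_def)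
  have ac: "a \<in> chars f" and ac': "a' \<in> chars f"
    using a a' by (simp_all add: rootchars_chars)
  have lam: "lam = bar f (cadd L a)"
    using Trns_decompD(4)[OF d] L(2) a(2) wadd_bar[OF L(1) ac] by simp
  have lam': "lam = bar f (cadd L' a')"
    using Trns_decompD(4)[OF d'] L'(2) a'(2) wadd_bar[OF L'(1) ac'] by simp
  have "3 dvd (L i 0 + L i 1 + L i 2 - (L' i 0 + L' i 1 + L' i 2))" if i: "i < f" for i
  proof -
    have "3 dvd (cadd L a i 0 + cadd L a i 1 + cadd L a i 2 -
        (cadd L' a' i 0 + cadd L' a' i 1 + cadd L' a' i 2))"
      using bar_eq_imp_3_dvd_row_sum_diff[OF cadd_chars[OF L(1) ac] cadd_chars[OF L'(1) ac'] _ i] lam lam'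
      by simp
    moreover have "cadd L a i 0 + cadd L a i 1 + cadd L a i 2 - (cadd L' a' i 0 + cadd L' a' i 1 + cadd L' a' i 2)
        = L i 0 + L i 1 + L i 2 - (L' i 0 + L' i 1 + L' i 2)"
      using rootchars_row_sum[OF a(1) i] rootchars_row_sum[OF a'(1) i] unfolding cadd_def by linarith
    ultimately show ?thesis
      by simp
  qed
  moreover have "alcimg f p (piW f w) (bar f L) (lowA f p) = alcimg f p (piW f w') (bar f L') (lowA f p)"
    using Trns_decompD(5)[OF d] Trns_decompD(5)[OF d'] L L' by simp
  ultimately have "piW f w = piW f w'" and LL': "bar f L = bar f L'"
    using alcimg_lowA_inj[OF p piW_Wgrp[OF f Trns_decompD(1)[OF d]] piW_Wgrp[OF f Trns_decompD(1)[OF d']]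
        L(1) L'(1)] by blast+
  then have "w = w'"
    using piW_inj[OF f Trns_decompD(1)[OF d] Trns_decompD(1)[OF d']] by blast
  moreover have "\<omega> = \<omega>'"
    using L L' LL' by simp
  moreover have "bar f (cadd L a) = bar f (cadd L a')"
    using lam Trns_decompD(4)[OF d'] \<open>\<omega> = \<omega>'\<close> L(2) a'(2) wadd_bar[OF L(1) ac'] by simp
  then have "\<nu> = \<nu>'"
    using bar_cadd_cancel[OF L(1) ac ac'] a a' by simp
  ultimately show ?thesis
    by simp
qed

lemma Trns_eq_Trns_rep:
  assumes f: "0 < f" and p: "0 < p" and d: "Trns_decomp f p lam C \<omega> \<nu> w"
  shows "Trns f p \<mu> sec (lam, C) = Trns_rep f p \<mu> sec \<omega> \<nu> w"
proof -
  have "(THE v. \<exists>\<omega>' \<nu>' w'. Trns_decomp f p lam C \<omega>' \<nu>' w' \<and> v = Trns_rep f p \<mu> sec \<omega>' \<nu>' w') =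
      Trns_rep f p \<mu> sec \<omega> \<nu> w"
  proof (rule the_equality)
    show "\<exists>\<omega>' \<nu>' w'. Trns_decomp f p lam C \<omega>' \<nu>' w' \<and>
        Trns_rep f p \<mu> sec \<omega> \<nu> w = Trns_rep f p \<mu> sec \<omega>' \<nu>' w'"
      using d by blast
  next
    fix v
    assume "\<exists>\<omega>' \<nu>' w'. Trns_decomp f p lam C \<omega>' \<nu>' w' \<and> v = Trns_rep f p \<mu> sec \<omega>' \<nu>' w'"
    then show "v = Trns_rep f p \<mu> sec \<omega> \<nu> w"
      using Trns_decomp_unique[OF f p d] by blast
  qed
  then show ?thesis
    by (simp add: Trns_def Trns_decomp_def Trns_rep_def conj_assoc)
qed

section \<open>Injectivity\<close>

lemma qcls_eqD:
  assumes x: "x \<in> chars f" and eq: "qcls f p x = qcls f p y"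
  obtains c where "\<And>i j. i < f \<Longrightarrow> j < 3 \<Longrightarrow> x i j - y i j = int p * c i - c ((i + f - 1) mod f)"
proof -
  have "(\<lambda>i j. 0) \<in> X0 f"
    by (simp add: X0_def chars_def)
  moreover have "csub x x = csub (cscale (int p) (\<lambda>i j. 0)) (piC f (\<lambda>i j. 0))"
    by (simp add: csub_def cscale_def piC_def fun_eq_iff)
  ultimately have "x \<in> qcls f p x"
    using x unfolding qcls_def by blast
  with eq obtain z where z: "z \<in> X0 f" and zx: "csub x y = csub (cscale (int p) z) (piC f z)"
    unfolding qcls_def by blast
  obtain c where c: "\<forall>i<f. \<forall>j<3. z i j = c i"
    using z by (auto simp: X0_iff)
  show thesis
  proof (rule that)
    fix i j :: nat
    assume i: "i < f" and j: "j < 3"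
    have "x i j - y i j = int p * z i j - z ((i + f - 1) mod f) j"
      using fun_cong[OF fun_cong[OF zx, of i], of j] i by (simp add: csub_def cscale_def piC_def)
    moreover have "(i + f - 1) mod f < f"
      using i by simp
    ultimately show "x i j - y i j = int p * c i - c ((i + f - 1) mod f)"
      using c i j by simp
  qed
qed

text \<open>Invertibility of \<open>p - \<pi>\<close>: an integer vector indexed by \<open>\<int>/f\<close> with \<open>e = p \<cdot> \<pi>\<^sup>-\<^sup>1 e\<close>
  vanishes, since its largest entry in absolute value would be multiplied by \<open>p \<ge> 2\<close>.\<close>

lemma cyclic_scaled_eq_zero:
  fixes e :: "nat \<Rightarrow> int" and p :: int
  assumes p: "2 \<le> p" and rec: "\<And>i. i < f \<Longrightarrow> e i = p * e ((i + 1) mod f)" and i: "i < f"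
  shows "e i = 0"
proof -
  define M where "M = Max ((\<lambda>i. \<bar>e i\<bar>) ` {..<f})"
  have fin: "finite ((\<lambda>i. \<bar>e i\<bar>) ` {..<f})" and ne: "(\<lambda>i. \<bar>e i\<bar>) ` {..<f} \<noteq> {}"
    using i by auto
  obtain k where k: "k < f" "\<bar>e k\<bar> = M"
    using Max_in[OF fin ne] unfolding M_def by auto
  have le: "\<bar>e j\<bar> \<le> M" if "j < f" for j
    unfolding M_def using fin that by auto
  define j where "j = (k + f - 1) mod f"
  have j: "j < f"
    using k(1) by (simp add: j_def)
  have "e j = p * e k"
    using rec[OF j] mod_succ_of_pred[OF k(1)] by (simp add: j_def)
  then have "p * M \<le> M"
    using le[OF j] k(2) p by (simp add: abs_mult)
  moreover have "0 \<le> M"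
    using k(2) by auto
  then have "2 * M \<le> p * M"
    using p by (rule mult_right_mono[rotated])
  ultimately have "M = 0"
    using \<open>0 \<le> M\<close> by linarith
  then show "e i = 0"
    using le[OF i] by simp
qed

lemma row_sum_defect_vanishes:
  fixes T1 T2 s1 s2 :: "nat \<Rightarrow> nat \<Rightarrow> int" and c :: "nat \<Rightarrow> int"
  assumes p: "2 \<le> p" and w1: "w1 \<in> Wgrp f" and w2: "w2 \<in> Wgrp f"
    and sums: "\<And>i. i < f \<Longrightarrow> T1 i 0 + T1 i 1 + T1 i 2 - (T2 i 0 + T2 i 1 + T2 i 2) =
        s1 i 0 + s1 i 1 + s1 i 2 - (s2 i 0 + s2 i 1 + s2 i 2)"
    and diff: "\<And>i j. i < f \<Longrightarrow> j < 3 \<Longrightarrow>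
        T1 i (inv (w1 i) j) - int p * s1 ((i + 1) mod f) (inv (w1 i) j) -
        (T2 i (inv (w2 i) j) - int p * s2 ((i + 1) mod f) (inv (w2 i) j)) =
        int p * c i - c ((i + f - 1) mod f)"
    and i: "i < f"
  shows "s1 ((i + 1) mod f) 0 + s1 ((i + 1) mod f) 1 + s1 ((i + 1) mod f) 2 -
      (s2 ((i + 1) mod f) 0 + s2 ((i + 1) mod f) 1 + s2 ((i + 1) mod f) 2) + 3 * c i = 0"
proof -
  define d where "d i = s1 i 0 + s1 i 1 + s1 i 2 - (s2 i 0 + s2 i 1 + s2 i 2)" for i
  define e where "e i = d i + 3 * c ((i + f - 1) mod f)" for i
  have rec: "e i = int p * e ((i + 1) mod f)" if i: "i < f" for i
  proof -
    define g1 where "g1 m = T1 i m - int p * s1 ((i + 1) mod f) m" for m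
    define g2 where "g2 m = T2 i m - int p * s2 ((i + 1) mod f) m" for m
    define K where "K = int p * c i - c ((i + f - 1) mod f)"
    have gj: "g1 (inv (w1 i) j) - g2 (inv (w2 i) j) = K" if "j < 3" for j
      using diff[OF i that] by (simp add: g1_def g2_def K_def)
    have three: "(0::nat) < 3" "(1::nat) < 3" "(2::nat) < 3"
      by simp_all
    have "(g1 (inv (w1 i) 0) + g1 (inv (w1 i) 1) + g1 (inv (w1 i) 2)) -
        (g2 (inv (w2 i) 0) + g2 (inv (w2 i) 1) + g2 (inv (w2 i) 2)) = 3 * K"
      using gj[OF three(1)] gj[OF three(2)] gj[OF three(3)] by linarith
    then have "d i - int p * d ((i + 1) mod f) = 3 * K"
      using sums[OF i] sum3_permutes_inv[OF WgrpD[OF w1, of i], of g1] sum3_permutes_inv[OF WgrpD[OF w2, of i], of g2]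
      by (simp add: g1_def g2_def d_def algebra_simps)
    then show ?thesis
      using mod_pred_of_succ[OF i] by (simp add: e_def K_def algebra_simps)
  qed
  have "e ((i + 1) mod f) = 0"
    using p i by (intro cyclic_scaled_eq_zero[of "int p" f e, OF _ rec]) simp_all
  then show ?thesis
    using mod_pred_of_succ[OF i] by (simp add: e_def d_def)
qed

lemma embedding_rigid:
  fixes T1 T2 s1 s2 :: "nat \<Rightarrow> nat \<Rightarrow> int" and c :: "nat \<Rightarrow> int"
  assumes p: "2 \<le> p" and w1: "w1 \<in> Wgrp f" and w2: "w2 \<in> Wgrp f"
    and T1: "\<And>i. i < f \<Longrightarrow> in_lower (real p) (\<lambda>m. of_int (T1 i m))"
    and T2: "\<And>i. i < f \<Longrightarrow> in_lower (real p) (\<lambda>m. of_int (T2 i m))"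
    and sums: "\<And>i. i < f \<Longrightarrow> T1 i 0 + T1 i 1 + T1 i 2 - (T2 i 0 + T2 i 1 + T2 i 2) =
        s1 i 0 + s1 i 1 + s1 i 2 - (s2 i 0 + s2 i 1 + s2 i 2)"
    and diff: "\<And>i j. i < f \<Longrightarrow> j < 3 \<Longrightarrow>
        T1 i (inv (w1 i) j) - int p * s1 ((i + 1) mod f) (inv (w1 i) j) -
        (T2 i (inv (w2 i) j) - int p * s2 ((i + 1) mod f) (inv (w2 i) j)) =
        int p * c i - c ((i + f - 1) mod f)"
    and i: "i < f"
  shows "w1 i = w2 i"
    and "\<forall>m<3. s1 ((i + 1) mod f) m - s2 ((i + 1) mod f) m = s1 ((i + 1) mod f) 0 - s2 ((i + 1) mod f) 0"
    and "\<forall>m<3. T1 i m - T2 i m = T1 i 0 - T2 i 0"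
proof -
  define n where "n = (i + 1) mod f"
  define b where "b = c ((i + f - 1) mod f)"
  define t2 :: "nat \<Rightarrow> real" where "t2 m = of_int (T2 i m - b)" for m
  define \<sigma>2 where "\<sigma>2 m = s2 n m - c i" for m
  have pos: "real p > 0"
    using p by simp
  have t2: "in_lower (real p) t2"
    using T2[OF i] in_lower_shift[of "real p" "\<lambda>m. of_int (T2 i m)" "- of_int b"] by (simp add: t2_def[abs_def])
  have coords: "of_int (T1 i (inv (w1 i) j)) - real p * of_int (s1 n (inv (w1 i) j)) =
      t2 (inv (w2 i) j) - real p * of_int (\<sigma>2 (inv (w2 i) j))" if j: "j < 3" for j
  proof -
    have "T1 i (inv (w1 i) j) - int p * s1 n (inv (w1 i) j) =
        (T2 i (inv (w2 i) j) - b) - int p * (s2 n (inv (w2 i) j) - c i)"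
      using diff[OF i j] by (simp add: n_def b_def algebra_simps)
    then have "real_of_int (T1 i (inv (w1 i) j) - int p * s1 n (inv (w1 i) j)) =
        real_of_int ((T2 i (inv (w2 i) j) - b) - int p * (s2 n (inv (w2 i) j) - c i))"
      by (simp only:)
    then show ?thesis
      by (simp add: t2_def \<sigma>2_def)
  qed
  have "s1 n 0 + s1 n 1 + s1 n 2 - (s2 n 0 + s2 n 1 + s2 n 2) + 3 * c i = 0"
    unfolding n_def by (rule row_sum_defect_vanishes[OF p w1 w2 sums diff i])
  then have sums_n: "3 dvd (s1 n 0 + s1 n 1 + s1 n 2 - (\<sigma>2 0 + \<sigma>2 1 + \<sigma>2 2))"
    by (simp add: \<sigma>2_def algebra_simps)
  have rigid: "w1 i = w2 i" "\<forall>m<3. s1 n m - \<sigma>2 m = s1 n 0 - \<sigma>2 0"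
      "\<forall>m<3. of_int (T1 i m) - t2 m = real p * of_int (s1 n 0 - \<sigma>2 0)"
    using lower_points_same_affine_image[OF WgrpD[OF w1, of i] WgrpD[OF w2, of i] pos T1[OF i] t2 coords sums_n]
    by blast+
  show "w1 i = w2 i"
    by (rule rigid(1))
  show "\<forall>m<3. s1 n m - s2 n m = s1 n 0 - s2 n 0"
  proof (intro allI impI)
    fix m :: nat
    assume "m < 3"
    then show "s1 n m - s2 n m = s1 n 0 - s2 n 0"
      using rigid(2)[rule_format, of m] by (simp add: \<sigma>2_def)
  qed
  show "\<forall>m<3. T1 i m - T2 i m = T1 i 0 - T2 i 0"
  proof (intro allI impI)
    fix m :: nat
    assume m: "m < 3"
    have "real_of_int (T1 i m) - t2 m = real_of_int (T1 i 0) - t2 0"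
      using rigid(3)[rule_format, OF m] rigid(3)[rule_format, of 0] by simp
    then have "real_of_int (T1 i m - T2 i m) = real_of_int (T1 i 0 - T2 i 0)"
      by (simp add: t2_def)
    then show "T1 i m - T2 i m = T1 i 0 - T2 i 0"
      by (simp only: of_int_eq_iff)
  qed
qed

lemma LamWmu_in_lower:
  assumes \<mu>: "\<mu> \<in> chars f" and lam: "lam \<in> LamWmu f p \<mu>" and L: "L \<in> chars f" "lam = bar f L"
    and i: "i < f"
  shows "in_lower (real p) (\<lambda>m. of_int (\<mu> i m + L i m))"
proof -
  have "csub \<mu> (eta f) \<in> chars f"
    using \<mu> eta_chars by (rule csub_chars)
  then have "cadd L (csub \<mu> (eta f)) \<in> wadd lam (bar f (csub \<mu> (eta f)))"
    unfolding wadd_def L(2) using bar_self[OF L(1)] bar_self by blast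
  then have "cofint (cadd L (csub \<mu> (eta f))) \<in> lowA f p"
    using lam by (simp add: LamWmu_def)
  then show ?thesis
    using i by (simp add: lowA_iff cofint_def cadd_def csub_def of_int_eta add.commute)
qed

lemma dot_rep_apply:
  fixes \<mu> a s :: "nat \<Rightarrow> nat \<Rightarrow> int"
  assumes "i < f"
  shows "dot f p w (cscale (-1) (piCinv f s)) (cadd (cadd (csub \<mu> (eta f)) a) s) i j =
    \<mu> i (inv (w i) j) + cadd s a i (inv (w i) j) - int p * s ((i + 1) mod f) (inv (w i) j) - eta f i j"
  using assms by (simp add: dot_apply cscale_def piCinv_def cadd_def csub_def)

lemma rep_classes_eq_imp:
  fixes \<mu> s1 s2 a1 a2 :: "nat \<Rightarrow> nat \<Rightarrow> int"
  assumes p: "2 \<le> p" and f: "0 < f" and \<mu>: "\<mu> \<in> chars f"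
    and w1: "w1 \<in> Wgrp f" and w2: "w2 \<in> Wgrp f" and s1: "s1 \<in> chars f" and s2: "s2 \<in> chars f"
    and a1: "a1 \<in> rootchars f" and a2: "a2 \<in> rootchars f"
    and lower1: "\<And>i. i < f \<Longrightarrow> in_lower (real p) (\<lambda>m. of_int (\<mu> i m + cadd s1 a1 i m))"
    and lower2: "\<And>i. i < f \<Longrightarrow> in_lower (real p) (\<lambda>m. of_int (\<mu> i m + cadd s2 a2 i m))"
    and eq: "qcls f p (dot f p w1 (cscale (-1) (piCinv f s1)) (cadd (cadd (csub \<mu> (eta f)) a1) s1)) =
      qcls f p (dot f p w2 (cscale (-1) (piCinv f s2)) (cadd (cadd (csub \<mu> (eta f)) a2) s2))"
  shows "w1 = w2" and "bar f s1 = bar f s2" and "bar f (cadd s1 a1) = bar f (cadd s2 a2)"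
proof -
  define T1 T2 where "T1 i m = \<mu> i m + cadd s1 a1 i m" and "T2 i m = \<mu> i m + cadd s2 a2 i m" for i m
  define x1 x2 where "x1 = dot f p w1 (cscale (-1) (piCinv f s1)) (cadd (cadd (csub \<mu> (eta f)) a1) s1)"
    and "x2 = dot f p w2 (cscale (-1) (piCinv f s2)) (cadd (cadd (csub \<mu> (eta f)) a2) s2)"
  have "cscale (-1) (piCinv f s1) \<in> chars f"
    using piCinv_chars[OF s1] by (simp add: chars_def cscale_def)
  moreover have "cadd (cadd (csub \<mu> (eta f)) a1) s1 \<in> chars f"
    using \<mu> eta_chars rootchars_chars[OF a1] s1 by (intro cadd_chars csub_chars)
  ultimately have "x1 \<in> chars f"
    unfolding x1_def by (rule dot_chars[OF w1])
  then obtain c where c: "\<And>i j. i < f \<Longrightarrow> j < 3 \<Longrightarrow> x1 i j - x2 i j = int p * c i - c ((i + f - 1) mod f)"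
    using qcls_eqD eq unfolding x1_def x2_def by blast
  have T_sums: "T1 i 0 + T1 i 1 + T1 i 2 - (T2 i 0 + T2 i 1 + T2 i 2) =
      s1 i 0 + s1 i 1 + s1 i 2 - (s2 i 0 + s2 i 1 + s2 i 2)" if "i < f" for i
    using rootchars_row_sum[OF a1 that] rootchars_row_sum[OF a2 that]
    unfolding T1_def T2_def cadd_def by linarith
  have T_diff: "T1 i (inv (w1 i) j) - int p * s1 ((i + 1) mod f) (inv (w1 i) j) -
      (T2 i (inv (w2 i) j) - int p * s2 ((i + 1) mod f) (inv (w2 i) j)) =
      int p * c i - c ((i + f - 1) mod f)" if "i < f" "j < 3" for i j
    using c[OF that] that(1) by (simp add: x1_def x2_def dot_rep_apply T1_def T2_def)
  have rigid: "w1 i = w2 i"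
      "\<forall>m<3. s1 ((i + 1) mod f) m - s2 ((i + 1) mod f) m = s1 ((i + 1) mod f) 0 - s2 ((i + 1) mod f) 0"
      "\<forall>m<3. T1 i m - T2 i m = T1 i 0 - T2 i 0" if "i < f" for i
    using embedding_rigid[OF p w1 w2 lower1[folded T1_def] lower2[folded T2_def] T_sums T_diff that]
    by blast+
  show "w1 = w2"
  proof
    fix i
    show "w1 i = w2 i"
      using rigid(1) WgrpD_id[OF w1] WgrpD_id[OF w2] by (cases "i < f") auto
  qed
  have "\<forall>i<f. \<forall>m<3. s1 i m - s2 i m = s1 i 0 - s2 i 0"
  proof (intro allI impI)
    fix i m :: nat
    assume i: "i < f" and m: "m < 3"
    have "(i + f - 1) mod f < f"
      using f by simp
    from rigid(2)[OF this, rule_format, OF m] show "s1 i m - s2 i m = s1 i 0 - s2 i 0"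
      using mod_succ_of_pred[OF i] by simp
  qed
  then show "bar f s1 = bar f s2"
    by (subst bar_eq_iff[OF s1 s2]) (rule exI[of _ "\<lambda>i. s1 i 0 - s2 i 0"])
  have "\<forall>i<f. \<forall>m<3. cadd s1 a1 i m - cadd s2 a2 i m = T1 i 0 - T2 i 0"
  proof (intro allI impI)
    fix i m :: nat
    assume "i < f" "m < 3"
    then show "cadd s1 a1 i m - cadd s2 a2 i m = T1 i 0 - T2 i 0"
      using rigid(3)[rule_format, of i m] by (simp add: T1_def T2_def)
  qed
  then show "bar f (cadd s1 a1) = bar f (cadd s2 a2)"
    by (subst bar_eq_iff[OF cadd_chars[OF s1 rootchars_chars[OF a1]] cadd_chars[OF s2 rootchars_chars[OF a2]]])
      (rule exI[of _ "\<lambda>i. T1 i 0 - T2 i 0"])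
qed

lemma Trns_rep_inj:
  assumes p: "2 \<le> p" and f: "0 < f" and \<mu>: "\<mu> \<in> chars f"
    and sec: "\<forall>\<omega> \<in> LamW f. sec \<omega> \<in> chars f \<and> bar f (sec \<omega>) = \<omega>"
    and lam1: "lam1 \<in> LamWmu f p \<mu>" and d1: "Trns_decomp f p lam1 C1 \<omega>1 \<nu>1 w1"
    and lam2: "lam2 \<in> LamWmu f p \<mu>" and d2: "Trns_decomp f p lam2 C2 \<omega>2 \<nu>2 w2"
    and eq: "Trns_rep f p \<mu> sec \<omega>1 \<nu>1 w1 = Trns_rep f p \<mu> sec \<omega>2 \<nu>2 w2"
  shows "lam1 = lam2 \<and> \<omega>1 = \<omega>2 \<and> w1 = w2"
proof -
  define s1 s2 where "s1 = sec \<omega>1" and "s2 = sec \<omega>2"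
  define a1 a2 where "a1 = can f \<nu>1" and "a2 = can f \<nu>2"
  have s1: "s1 \<in> chars f" "bar f s1 = \<omega>1" and s2: "s2 \<in> chars f" "bar f s2 = \<omega>2"
    using sec Trns_decompD(2)[OF d1] Trns_decompD(2)[OF d2] by (auto simp: s1_def s2_def)
  have a1: "a1 \<in> rootchars f" "bar f a1 = \<nu>1" and a2: "a2 \<in> rootchars f" "bar f a2 = \<nu>2"
    using can_rootchars Trns_decompD(3)[OF d1] Trns_decompD(3)[OF d2] by (simp_all add: a1_def a2_def)
  have l1: "lam1 = bar f (cadd s1 a1)"
    using Trns_decompD(4)[OF d1] s1(2) a1(2) wadd_bar[OF s1(1) rootchars_chars[OF a1(1)]] by simp
  have l2: "lam2 = bar f (cadd s2 a2)"
    using Trns_decompD(4)[OF d2] s2(2) a2(2) wadd_bar[OF s2(1) rootchars_chars[OF a2(1)]] by simp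
  note lower = LamWmu_in_lower[OF \<mu> lam1 cadd_chars[OF s1(1) rootchars_chars[OF a1(1)]] l1]
    LamWmu_in_lower[OF \<mu> lam2 cadd_chars[OF s2(1) rootchars_chars[OF a2(1)]] l2]
  have "qcls f p (dot f p w1 (cscale (-1) (piCinv f s1)) (cadd (cadd (csub \<mu> (eta f)) a1) s1)) =
      qcls f p (dot f p w2 (cscale (-1) (piCinv f s2)) (cadd (cadd (csub \<mu> (eta f)) a2) s2))"
    using eq by (simp add: Trns_rep_def s1_def s2_def a1_def a2_def)
  note rep = rep_classes_eq_imp[OF p f \<mu> Trns_decompD(1)[OF d1] Trns_decompD(1)[OF d2]
      s1(1) s2(1) a1(1) a2(1) lower this]
  show ?thesis
    using rep l1 l2 s1(2) s2(2) by simp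
qed

theorem proposition2p5:
  fixes f p :: nat and \<mu> :: "nat \<Rightarrow> nat \<Rightarrow> int"
    and sec :: "(nat \<Rightarrow> nat \<Rightarrow> int) set \<Rightarrow> nat \<Rightarrow> nat \<Rightarrow> int"
  assumes "prime p" and "1 \<le> f" and "\<mu> \<in> chars f"
    and "\<forall>\<omega> \<in> LamW f. sec \<omega> \<in> chars f \<and> bar f (sec \<omega>) = \<omega>"
  shows "inj_on (Trns f p \<mu> sec) (LamWmu f p \<mu> \<times> Acal f p)"
proof (rule inj_onI, clarify)
  fix lam1 C1 lam2 C2
  assume lam1: "lam1 \<in> LamWmu f p \<mu>" and C1: "C1 \<in> Acal f p"
    and lam2: "lam2 \<in> LamWmu f p \<mu>" and C2: "C2 \<in> Acal f p"
    and eq: "Trns f p \<mu> sec (lam1, C1) = Trns f p \<mu> sec (lam2, C2)"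
  have f: "0 < f" and p: "2 \<le> p"
    using assms(1,2) prime_ge_2_nat by auto
  have "lam1 \<in> LamW f" "lam2 \<in> LamW f"
    using lam1 lam2 by (simp_all add: LamWmu_def)
  then obtain \<omega>1 \<nu>1 w1 \<omega>2 \<nu>2 w2 where d1: "Trns_decomp f p lam1 C1 \<omega>1 \<nu>1 w1"
    and d2: "Trns_decomp f p lam2 C2 \<omega>2 \<nu>2 w2"
    using Trns_decomp_exists[OF f _ C1] Trns_decomp_exists[OF f _ C2] by metis
  have "Trns_rep f p \<mu> sec \<omega>1 \<nu>1 w1 = Trns_rep f p \<mu> sec \<omega>2 \<nu>2 w2"
    using eq p by (simp add: Trns_eq_Trns_rep[OF f _ d1] Trns_eq_Trns_rep[OF f _ d2])
  then have "lam1 = lam2 \<and> \<omega>1 = \<omega>2 \<and> w1 = w2"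
    using Trns_rep_inj[OF p f assms(3,4) lam1 d1 lam2 d2] by blast
  then show "lam1 = lam2 \<and> C1 = C2"
    using Trns_decompD(5)[OF d1] Trns_decompD(5)[OF d2] by simp
qed

end
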